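(* Let $m\ge2$, $k\ge2$, $n\ge1$, $\mathcal{A}=(a_{i_1i_2\cdots i_m})\in\mathbb{C}^{[m,n]}$ and $\mathcal{B}=(b_{i_1i_2\cdots i_k})\in\mathbb{C}^{[k,n]}$. For $i\in[n]$ let $c_{i\cdots i}=\sum_{i_2,\ldots,i_m=1}^n a_{ii_2\cdots i_m}b_{i_2i\cdots i}\cdots b_{i_mi\cdots i}$ (the diagonal entries of $\mathcal{A}\mathcal{B}$). Then \[\sigma(\mathcal{A}\mathcal{B})\subseteq\mathbf{G}=\bigcup_{i\in[n]}\{z\in\mathbb{C}:|z-c_{i\cdots i}|\le r_i(\mathcal{A})(R(\mathcal{B}))^{m-1}-|c_{i\cdots i}|\}.\]
   Context: $[n]=\{1,\ldots,n\}$. $\mathbb{C}^{[m,n]}$ denotes the set of order $m$, dimension $n$ complex tensors. For a tensor $\mathcal{T}=(t_{i_1\cdots i_p})$ of order $p$ and dimension $n$: $r_i(\mathcal{T})=\sum_{i_2,\ldots,i_p=1}^n|t_{ii_2\cdots i_p}|$, $R(\mathcal{T})=\max_{i\in[n]}r_i(\mathcal{T})$. General product: $\mathcal{A}\mathcal{B}=(c_{i\alpha_1\cdots\alpha_{m-1}})$ is the order $(m-1)(k-1)+1$, dimension $n$ tensor with $c_{i\alpha_1\cdots\alpha_{m-1}}=\sum_{i_2,\ldots,i_m=1}^n a_{ii_2\cdots i_m}b_{i_2\alpha_1}\cdots b_{i_m\alpha_{m-1}}$, $i\in[n]$, $\alpha_j\in[n]^{k-1}$ (where $b_{j\alpha}$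 with $\alpha=(j_2,\ldots,j_k)$ means $b_{jj_2\cdots j_k}$). Eigenvalues of a tensor $\mathcal{T}$ of order $p\ge2$: $\lambda\in\mathbb{C}$ such that there is a nonzero $x\in\mathbb{C}^n$ with $\sum_{i_2,\ldots,i_p=1}^n t_{ii_2\cdots i_p}x_{i_2}\cdots x_{i_p}=\lambda x_i^{p-1}$ for all $i\in[n]$; $\sigma(\mathcal{T})$ is the set of eigenvalues of $\mathcal{T}$. *)

theory Defs
  imports Complex_Main
begin

text \<open>Tensors of order p and dimension n are represented as functions
  from index lists to complex numbers; only lists of length p with entries
  in {0..<n} matter (0-based indices: index i stands for i+1 in the paper).\<close>

type_synonym tensor = "nat list \<Rightarrow> complex"

definition idx :: "nat \<Rightarrow> nat \<Rightarrow> nat list set" where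
  "idx p n = {xs. length xs = p \<and> set xs \<subseteq> {..<n}}"

definition row_abs_sum :: "nat \<Rightarrow> nat \<Rightarrow> tensor \<Rightarrow> nat \<Rightarrow> real" where
  "row_abs_sum p n T i = (\<Sum>rest\<in>idx (p - 1) n. cmod (T (i # rest)))"

definition max_row_abs_sum :: "nat \<Rightarrow> nat \<Rightarrow> tensor \<Rightarrow> real" where
  "max_row_abs_sum p n T = Max ((row_abs_sum p n T) ` {..<n})"

text \<open>General product of A (order m) and B (order k), dimension n: an
  index i # alpha_1 @ ... @ alpha_(m-1) with each alpha_j of length k-1.\<close>
definition tprod :: "nat \<Rightarrow> nat \<Rightarrow> nat \<Rightarrow> tensor \<Rightarrow> tensor \<Rightarrow> tensor" where
  "tprod m k n A B = (\<lambda>xs.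
     (\<Sum>rest\<in>idx (m - 1) n. A (hd xs # rest) *
        (\<Prod>j<m - 1. B (rest ! j # take (k - 1) (drop (j * (k - 1)) (tl xs))))))"

definition is_eigenvalue :: "nat \<Rightarrow> nat \<Rightarrow> tensor \<Rightarrow> complex \<Rightarrow> bool" where
  "is_eigenvalue p n T lam \<longleftrightarrow>
     (\<exists>x :: nat \<Rightarrow> complex. (\<exists>i<n. x i \<noteq> 0) \<and>
        (\<forall>i<n. (\<Sum>rest\<in>idx (p - 1) n. T (i # rest) * (\<Prod>j<p - 1. x (rest ! j)))
               = lam * x i ^ (p - 1)))"

definition spectrum_t :: "nat \<Rightarrow> nat \<Rightarrow> tensor \<Rightarrow> complex set" where
  "spectrum_t p n T = {lam. is_eigenvalue p n T lam}"

end

theory Submission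
  imports Defs
begin

text \<open>A Gershgorin argument. If \<open>x\<close> is an eigenvector of a tensor \<open>T\<close> of order \<open>p\<close>
  and \<open>|x t|\<close> is maximal, the \<open>t\<close>-th eigen-equation bounds
  \<open>|\<lambda> - T(t,\<dots>,t)| |x t|\<^sup>p\<^sup>-\<^sup>1\<close> by \<open>(r\<^sub>t(T) - |T(t,\<dots>,t)|) |x t|\<^sup>p\<^sup>-\<^sup>1\<close>.
  For \<open>T = AB\<close> the diagonal entries are the \<open>c i\<close>, and splitting an index of \<open>AB\<close>
  into its \<open>m - 1\<close> blocks factors the row sum:
  \<open>r\<^sub>i(AB) \<le> \<Sum> |A(i,i\<^sub>2,\<dots>,i\<^sub>m)| r\<^sub>i\<^sub>2(B) \<cdots> r\<^sub>i\<^sub>m(B) \<le> r\<^sub>i(A) R(B)\<^sup>m\<^sup>-\<^sup>1\<close>.\<close>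

lemma idx_Suc: "idx (Suc p) n = (\<lambda>(a, xs). a # xs) ` ({..<n} \<times> idx p n)"
  unfolding idx_def
  by (auto simp: image_def)
     (metis Suc_length_conv insert_subset lessThan_iff list.simps(15))

lemma idx_0 [simp]: "idx 0 n = {[]}"
  by (auto simp: idx_def)

lemma finite_idx [simp]: "finite (idx p n)"
  by (induction p) (simp_all add: idx_Suc)

lemma nth_idx_less: "xs \<in> idx p n \<Longrightarrow> j < p \<Longrightarrow> xs ! j < n"
  by (auto simp: idx_def dest!: nth_mem)

lemma replicate_in_idx: "i < n \<Longrightarrow> replicate p i \<in> idx p n"
  by (auto simp: idx_def)

lemma idx_add: "idx (a + b) n = (\<lambda>(xs, ys). xs @ ys) ` (idx a n \<times> idx b n)"
proof
  show "idx (a + b) n \<subseteq> (\<lambda>(xs, ys). xs @ ys) ` (idx a n \<times> idx b n)"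
  proof
    fix zs assume "zs \<in> idx (a + b) n"
    hence "take a zs \<in> idx a n" "drop a zs \<in> idx b n"
      unfolding idx_def by (auto dest: in_set_takeD in_set_dropD)
    thus "zs \<in> (\<lambda>(xs, ys). xs @ ys) ` (idx a n \<times> idx b n)"
      by (intro image_eqI[of _ _ "(take a zs, drop a zs)"]) auto
  qed
qed (auto simp: idx_def)

lemma inj_on_append_idx: "inj_on (\<lambda>(xs, ys). xs @ ys) (idx a n \<times> idx b n)"
  by (auto simp: inj_on_def idx_def)

text \<open>Cutting an index of length \<open>q L\<close> into \<open>q\<close> consecutive blocks of length \<open>L\<close>
  identifies \<open>idx (q L) n\<close> with the \<open>q\<close>-fold product of \<open>idx L n\<close>, so a sum of
  block-wise products factors.\<close>

lemma sum_idx_prod_blocks: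
  fixes f :: "nat \<Rightarrow> nat list \<Rightarrow> 'a::comm_semiring_1"
  shows "(\<Sum>xs\<in>idx (q * L) n. \<Prod>j<q. f j (take L (drop (j * L) xs)))
       = (\<Prod>j<q. \<Sum>ys\<in>idx L n. f j ys)"
proof (induction q arbitrary: f)
  case 0
  then show ?case by simp
next
  case (Suc q)
  have blocks: "(\<Prod>j<Suc q. f j (take L (drop (j * L) (xs @ ys))))
      = f 0 xs * (\<Prod>j<q. f (Suc j) (take L (drop (j * L) ys)))"
    if "xs \<in> idx L n" for xs ys
    using that by (subst prod.lessThan_Suc_shift) (simp add: idx_def)
  have "(\<Sum>zs\<in>idx (Suc q * L) n. \<Prod>j<Suc q. f j (take L (drop (j * L) zs)))
      = (\<Sum>(xs, ys)\<in>idx L n \<times> idx (q * L) n.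
           \<Prod>j<Suc q. f j (take L (drop (j * L) (xs @ ys))))"
    unfolding mult_Suc idx_add
    by (subst sum.reindex[OF inj_on_append_idx]) (simp add: case_prod_unfold)
  also have "\<dots> = (\<Sum>xs\<in>idx L n. f 0 xs *
        (\<Sum>ys\<in>idx (q * L) n. \<Prod>j<q. f (Suc j) (take L (drop (j * L) ys))))"
    by (simp only: sum.cartesian_product[symmetric] sum_distrib_left) (intro sum.cong refl blocks)
  also have "\<dots> = (\<Prod>j<Suc q. \<Sum>ys\<in>idx L n. f j ys)"
    using Suc.IH[of "\<lambda>j. f (Suc j)"]
    by (simp add: sum_distrib_right prod.lessThan_Suc_shift del: prod.lessThan_Suc)
  finally show ?case .
qed

lemma row_abs_sum_nonneg: "row_abs_sum p n T i \<ge> 0"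
  unfolding row_abs_sum_def by (simp add: sum_nonneg)

lemma row_abs_sum_le_max: "i < n \<Longrightarrow> row_abs_sum p n T i \<le> max_row_abs_sum p n T"
  unfolding max_row_abs_sum_def by (intro Max_ge) auto

lemma eigenvector_max_component:
  fixes x :: "nat \<Rightarrow> complex"
  assumes "\<exists>i<n. x i \<noteq> 0"
  obtains t where "t < n" "x t \<noteq> 0" "\<And>i. i < n \<Longrightarrow> cmod (x i) \<le> cmod (x t)"
proof -
  have fin: "finite ((\<lambda>i. cmod (x i)) ` {..<n})" by simp
  have ne: "(\<lambda>i. cmod (x i)) ` {..<n} \<noteq> {}" using assms by auto
  obtain t where t: "t < n" "Max ((\<lambda>i. cmod (x i)) ` {..<n}) = cmod (x t)"
    using Max_in[OF fin ne] by auto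
  hence max: "cmod (x i) \<le> cmod (x t)" if "i < n" for i
    using Max_ge[OF fin] that by (metis image_eqI lessThan_iff)
  from assms obtain i where "i < n" "x i \<noteq> 0" by auto
  with max have "x t \<noteq> 0" by (metis norm_le_zero_iff norm_zero)
  with t(1) max show thesis using that by blast
qed

lemma norm_prod_components_le:
  assumes "xs \<in> idx p n" and "\<And>i. i < n \<Longrightarrow> cmod (x i) \<le> cmod (x t)"
  shows "cmod (\<Prod>j<p. x (xs ! j)) \<le> cmod (x t) ^ p"
proof -
  have "(\<Prod>j<p. cmod (x (xs ! j))) \<le> (\<Prod>j<p. cmod (x t))"
    using assms by (intro prod_mono) (auto intro: nth_idx_less)
  thus ?thesis by (simp add: prod_norm[symmetric])
qed

theorem tensor_eigenvalue_in_gershgorin_disc: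
  assumes "is_eigenvalue p n T lam"
  shows "\<exists>i<n. cmod (lam - T (i # replicate (p - 1) i))
           \<le> row_abs_sum p n T i - cmod (T (i # replicate (p - 1) i))"
proof -
  define q where "q = p - 1"
  define S where "S = idx q n"
  define summand where "summand x t rest = T (t # rest) * (\<Prod>j<q. x (rest ! j))" for x t rest
  obtain x where nz: "\<exists>i<n. x i \<noteq> 0"
    and eq: "\<And>i. i < n \<Longrightarrow> (\<Sum>rest\<in>S. summand x i rest) = lam * x i ^ q"
    using assms unfolding is_eigenvalue_def S_def summand_def q_def by auto
  obtain t where t: "t < n" "x t \<noteq> 0" and max: "\<And>i. i < n \<Longrightarrow> cmod (x i) \<le> cmod (x t)"
    using eigenvector_max_component[OF nz] by blast
  define d where "d = replicate q t"
  define off where "off = S - {d}"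
  have dS: "d \<in> S"
    using t(1) by (simp add: S_def d_def replicate_in_idx)
  have "lam * x t ^ q = T (t # d) * x t ^ q + (\<Sum>rest\<in>off. summand x t rest)"
    using eq[OF t(1)] sum.remove[OF _ dS, of "summand x t"]
    by (simp add: S_def off_def summand_def d_def)
  hence "(lam - T (t # d)) * x t ^ q = (\<Sum>rest\<in>off. summand x t rest)"
    by (simp add: algebra_simps)
  hence "cmod (lam - T (t # d)) * cmod (x t) ^ q \<le> (\<Sum>rest\<in>off. cmod (summand x t rest))"
    by (metis norm_mult norm_power norm_sum)
  also have "\<dots> \<le> (\<Sum>rest\<in>off. cmod (T (t # rest))) * cmod (x t) ^ q"
    unfolding summand_def norm_mult sum_distrib_right
    by (intro sum_mono mult_left_mono norm_prod_components_le[where x = x and t = t])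
       (auto simp: off_def S_def max)
  finally have "cmod (lam - T (t # d)) \<le> (\<Sum>rest\<in>off. cmod (T (t # rest)))"
    using t(2) by (simp add: mult_le_cancel_right)
  also have "\<dots> = row_abs_sum p n T t - cmod (T (t # d))"
    using sum.remove[OF _ dS, of "\<lambda>rest. cmod (T (t # rest))"]
    by (simp add: row_abs_sum_def S_def off_def q_def)
  finally show ?thesis
    using t(1) by (auto simp: d_def q_def)
qed

lemma tprod_diagonal:
  "tprod m k n A B (i # replicate ((m - 1) * (k - 1)) i)
     = (\<Sum>rest\<in>idx (m - 1) n. A (i # rest) * (\<Prod>j<m - 1. B (rest ! j # replicate (k - 1) i)))"
proof -
  have "take (k - 1) (drop (j * (k - 1)) (replicate ((m - 1) * (k - 1)) i)) = replicate (k - 1) i"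
    if "j < m - 1" for j
  proof -
    have "j * (k - 1) + (k - 1) \<le> (m - 1) * (k - 1)"
      using that by (metis add.commute mult_Suc less_eq_Suc_le mult_le_mono1)
    thus ?thesis by simp
  qed
  thus ?thesis
    unfolding tprod_def by (intro sum.cong refl arg_cong2[where f = "(*)"] prod.cong) auto
qed

lemma row_abs_sum_tprod_le:
  "row_abs_sum ((m - 1) * (k - 1) + 1) n (tprod m k n A B) i
     \<le> row_abs_sum m n A i * max_row_abs_sum k n B ^ (m - 1)"
proof -
  define q where "q = m - 1"
  define L where "L = k - 1"
  define R where "R = max_row_abs_sum k n B"
  define b where "b rest rest' j = cmod (B (rest ! j # take L (drop (j * L) rest')))" for rest rest' j
  have "row_abs_sum (q * L + 1) n (tprod m k n A B) i
      = (\<Sum>rest'\<in>idx (q * L) n. cmod (\<Sum>rest\<in>idx q n. A (i # rest) *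
          (\<Prod>j<q. B (rest ! j # take L (drop (j * L) rest')))))"
    by (simp add: row_abs_sum_def tprod_def q_def L_def)
  also have "\<dots> \<le> (\<Sum>rest'\<in>idx (q * L) n. \<Sum>rest\<in>idx q n.
                    cmod (A (i # rest)) * (\<Prod>j<q. b rest rest' j))"
    by (intro sum_mono order.trans[OF norm_sum]) (simp add: b_def norm_mult prod_norm)
  also have "\<dots> = (\<Sum>rest\<in>idx q n. cmod (A (i # rest)) *
                    (\<Sum>rest'\<in>idx (q * L) n. \<Prod>j<q. b rest rest' j))"
    by (subst sum.swap) (simp add: sum_distrib_left)
  also have "\<dots> = (\<Sum>rest\<in>idx q n. cmod (A (i # rest)) * (\<Prod>j<q. row_abs_sum k n B (rest ! j)))"
    using sum_idx_prod_blocks[where f = "\<lambda>j ys. cmod (B (_ ! j # ys))" and q = q and L = L]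
    by (simp add: b_def row_abs_sum_def L_def)
  also have "\<dots> \<le> (\<Sum>rest\<in>idx q n. cmod (A (i # rest)) * R ^ q)"
  proof (intro sum_mono mult_left_mono)
    fix rest assume "rest \<in> idx q n"
    hence "(\<Prod>j<q. row_abs_sum k n B (rest ! j)) \<le> (\<Prod>j<q. R)"
      by (intro prod_mono conjI row_abs_sum_nonneg)
         (auto simp: R_def intro: row_abs_sum_le_max nth_idx_less)
    thus "(\<Prod>j<q. row_abs_sum k n B (rest ! j)) \<le> R ^ q" by simp
  qed simp
  also have "\<dots> = row_abs_sum m n A i * R ^ q"
    by (simp add: row_abs_sum_def q_def sum_distrib_right)
  finally show ?thesis by (simp add: q_def L_def R_def)
qed

theorem theorem4p3:
  fixes m k n :: nat and A B :: tensor
  assumes "m \<ge> 2" and "k \<ge> 2" and "n \<ge> 1"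
  defines "c \<equiv> (\<lambda>i. \<Sum>rest\<in>idx (m - 1) n.
              A (i # rest) * (\<Prod>j<m - 1. B (rest ! j # replicate (k - 1) i)))"
  shows "spectrum_t ((m - 1) * (k - 1) + 1) n (tprod m k n A B) \<subseteq>
    (\<Union>i\<in>{..<n}. {z. cmod (z - c i) \<le>
        row_abs_sum m n A i * (max_row_abs_sum k n B) ^ (m - 1) - cmod (c i)})"
proof
  fix lam assume "lam \<in> spectrum_t ((m - 1) * (k - 1) + 1) n (tprod m k n A B)"
  moreover have "tprod m k n A B (i # replicate ((m - 1) * (k - 1)) i) = c i" for i
    unfolding c_def by (rule tprod_diagonal)
  ultimately obtain i where "i < n" and
    "cmod (lam - c i)
      \<le> row_abs_sum ((m - 1) * (k - 1) + 1) n (tprod m k n A B) i - cmod (c i)"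
    using tensor_eigenvalue_in_gershgorin_disc unfolding spectrum_t_def
    by (metis add_diff_cancel_right' mem_Collect_eq)
  with row_abs_sum_tprod_le[of m k n A B i]
  show "lam \<in> (\<Union>i\<in>{..<n}. {z. cmod (z - c i) \<le>
        row_abs_sum m n A i * (max_row_abs_sum k n B) ^ (m - 1) - cmod (c i)})"
    by force
qed

end
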